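(* There exist $p\in\mathcal P$ and $x\in N$ such that $D_{\mu(p)}(p)=\{x\}\subseteq D_{\mu(p^r)}(p^r)$ if and only if $(h,n)\notin T_2$, where $T_2=\{(h,n): h=2\}\cup\{(h,n): n\le3\}\cup\{(4,4)\}$.
   Context: Let $n,h\ge2$ be integers, $N=\{1,\dots,n\}$, $H=\{1,\dots,h\}$. $\mathcal P$ is the set of $h$-tuples $p=(p_1,\dots,p_h)$ of linear orders on $N$; $p^r$ is obtained by reversing each $p_i$; $x>_{p_i}y$ means $x\ne y$ and $p_i$ ranks $x$ above $y$. For an integer $\mu$ with $h/2<\mu\le h$, $D_\mu(p)=\{x\in N: \forall y\in N,\ |\{i: y>_{p_i}x\}|<\mu\}$, and $\mu(p)=\min\{\mu\in\mathbb N\cap(h/2,h]: D_\mu(p)\neq\varnothing\}$. *)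

theory Defs
  imports Main
begin

text \<open>A linear order on N = {1..n} is a relation r with linear_order_on {1..n} r,
  where (a,b) in r means that b is ranked weakly above a.\<close>

definition is_profile :: "nat \<Rightarrow> nat \<Rightarrow> (nat \<Rightarrow> nat rel) \<Rightarrow> bool" where
  "is_profile n h p \<longleftrightarrow> (\<forall>i\<in>{1..h}. linear_order_on {1..n} (p i))"

definition above :: "nat rel \<Rightarrow> nat \<Rightarrow> nat \<Rightarrow> bool" where
  "above r x y \<longleftrightarrow> x \<noteq> y \<and> (y, x) \<in> r"

definition rev_profile :: "(nat \<Rightarrow> nat rel) \<Rightarrow> (nat \<Rightarrow> nat rel)" where
  "rev_profile p = (\<lambda>i. converse (p i))"

definition D :: "nat \<Rightarrow> nat \<Rightarrow> nat \<Rightarrow> (nat \<Rightarrow> nat rel) \<Rightarrow> nat set" where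
  "D n h mu p = {x \<in> {1..n}. \<forall>y\<in>{1..n}. card {i \<in> {1..h}. above (p i) y x} < mu}"

definition mu_of :: "nat \<Rightarrow> nat \<Rightarrow> (nat \<Rightarrow> nat rel) \<Rightarrow> nat" where
  "mu_of n h p = (LEAST mu. h < 2 * mu \<and> mu \<le> h \<and> D n h mu p \<noteq> {})"

end

theory Submission
  imports Defs
begin

text \<open>Write \<open>c(y, x)\<close> for the number of voters ranking \<open>y\<close> above \<open>x\<close>, so that
  \<open>c(y, x) + c(x, y) = h\<close>. If \<open>x\<close> is the unique \<open>\<mu>(p)\<close>-winner of \<open>p\<close> and a \<open>\<mu>(p\<^sup>r)\<close>-winner
  of \<open>p\<^sup>r\<close>, then \<open>\<mu>(p) < h\<close>, since otherwise every voter's top candidate lies in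
  \<open>D\<^sub>h(p) = {x}\<close>, and \<open>x\<close>, ranked first unanimously, cannot win \<open>p\<^sup>r\<close>; this excludes
  \<open>h = 2\<close>. For \<open>n \<le> 3\<close> and for \<open>n = h = 4\<close> the minimality of \<open>\<mu>(p)\<close> and
  \<open>\<mu>(p\<^sup>r)\<close> forces margins incompatible with \<open>c(y, x) + c(x, y) = h\<close>, resp. with
  the bound \<open>2h\<close> on the three counts along a cycle.

  Conversely, let the voters \<open>i \<le> h div 2 + 1\<close> rank candidate \<open>n\<close> first and the others rank
  it last, and let voter \<open>i\<close> rank \<open>1, \<dots>, n - 1\<close> by the rotation \<open>(i - v) mod (n - 1)\<close>. Then
  \<open>n\<close> is the unique majority winner. In the reversed profile no candidate is a majority winner,
  because every candidate other than \<open>n\<close> beats its cyclic successor except for the at most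
  \<open>(h - 1) div (n - 1) + 1\<close> voters where the rotation wraps around; so \<open>\<mu>(p\<^sup>r)\<close> exceeds the
  majority quota, which is exactly the margin by which \<open>n\<close> beats every other candidate.\<close>

definition pref_count :: "nat \<Rightarrow> (nat \<Rightarrow> nat rel) \<Rightarrow> nat \<Rightarrow> nat \<Rightarrow> nat" where
  "pref_count h p y x = card {i \<in> {1..h}. above (p i) y x}"

lemma D_pref_count: "D n h mu p = {x \<in> {1..n}. \<forall>y\<in>{1..n}. pref_count h p y x < mu}"
  by (simp add: D_def pref_count_def)

lemma above_converse [simp]: "above (r\<inverse>) y x \<longleftrightarrow> above r x y"
  by (auto simp: above_def)

lemma D_rev_profile: "D n h mu (rev_profile p) = {x \<in> {1..n}. \<forall>y\<in>{1..n}. pref_count h p x y < mu}"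
  by (simp add: D_def pref_count_def rev_profile_def)

lemma is_profile_rev_profile: "is_profile n h p \<Longrightarrow> is_profile n h (rev_profile p)"
  by (simp add: is_profile_def rev_profile_def)

lemma pref_count_self [simp]: "pref_count h p x x = 0"
  by (simp add: pref_count_def above_def)

lemma profile_linear_order:
  assumes "is_profile n h p" "i \<in> {1..h}"
  shows "trans (p i)" "antisym (p i)"
    "\<lbrakk>x \<in> {1..n}; y \<in> {1..n}; x \<noteq> y\<rbrakk> \<Longrightarrow> above (p i) x y \<or> above (p i) y x"
  using assms by (auto simp: is_profile_def order_on_defs total_on_def above_def)

lemma pref_count_complement:
  assumes "is_profile n h p" "x \<in> {1..n}" "y \<in> {1..n}" "x \<noteq> y"
  shows "pref_count h p y x + pref_count h p x y = h"
proof -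
  let ?Y = "{i \<in> {1..h}. above (p i) y x}" and ?X = "{i \<in> {1..h}. above (p i) x y}"
  have "?Y \<inter> ?X = {}"
    using profile_linear_order(2)[OF assms(1)] by (auto simp: above_def antisym_def)
  moreover have "?Y \<union> ?X = {1..h}"
    using profile_linear_order(3)[OF assms(1) _ assms(2-4)] by blast
  ultimately show ?thesis
    unfolding pref_count_def using card_Un_disjoint[of ?Y ?X] by simp
qed

text \<open>No voter ranks a strict cycle a > b > c > a, so each voter contributes at most two of the three
  counts.\<close>
lemma pref_count_cycle_le:
  assumes "is_profile n h p"
  shows "pref_count h p a b + pref_count h p b c + pref_count h p c a \<le> 2 * h"
proof -
  let ?ind = "\<lambda>P. if P then 1 else 0 :: nat"
  have card_eq: "card {i \<in> {1..h}. P i} = (\<Sum>i\<in>{1..h}. ?ind (P i))" for P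
    by (simp add: sum.If_cases Int_def)
  have "pref_count h p a b + pref_count h p b c + pref_count h p c a
      = (\<Sum>i\<in>{1..h}. ?ind (above (p i) a b) + ?ind (above (p i) b c) + ?ind (above (p i) c a))"
    unfolding pref_count_def card_eq sum.distrib by simp
  also have "\<dots> \<le> (\<Sum>i\<in>{1..h}. 2)"
  proof (rule sum_mono)
    fix i assume "i \<in> {1..h}"
    then have "\<not> (above (p i) a b \<and> above (p i) b c \<and> above (p i) c a)"
      using profile_linear_order(1,2)[OF assms] unfolding above_def trans_def antisym_def by blast
    then show "?ind (above (p i) a b) + ?ind (above (p i) b c) + ?ind (above (p i) c a) \<le> 2"
      by auto
  qed
  finally show ?thesis by simp
qed

lemma profile_top_exists:
  assumes "is_profile n h p" "i \<in> {1..h}" "n \<ge> 1"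
  obtains t where "t \<in> {1..n}" "\<And>y. y \<in> {1..n} \<Longrightarrow> \<not> above (p i) y t"
proof -
  have lin: "linear_order_on {1..n} (p i)"
    using assms by (simp add: is_profile_def)
  then have "p i \<subseteq> {1..n} \<times> {1..n}"
    by (simp add: order_on_defs)
  then have "finite (p i - Id)"
    by (rule finite_subset[THEN finite_Diff]) simp
  then have "wf ((p i - Id)\<inverse>)"
    using finite_acyclic_wf_converse linear_order_on_acyclic[OF lin] by blast
  moreover have "n \<in> {1..n}"
    using assms(3) by simp
  ultimately obtain t where "t \<in> {1..n}" "\<And>y. (y, t) \<in> (p i - Id)\<inverse> \<Longrightarrow> y \<notin> {1..n}"
    by (rule wfE_min) blast
  then show thesis
    by (intro that) (auto simp: above_def)
qed

lemma top_in_D_h: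
  assumes "i \<in> {1..h}" "t \<in> {1..n}" "\<And>y. y \<in> {1..n} \<Longrightarrow> \<not> above (p i) y t"
  shows "t \<in> D n h h p"
proof -
  have "pref_count h p y t < h" if "y \<in> {1..n}" for y
  proof -
    have "pref_count h p y t \<le> card ({1..h} - {i})"
      unfolding pref_count_def using assms(3)[OF that] by (intro card_mono) auto
    then show ?thesis
      using assms(1) by auto
  qed
  then show ?thesis
    using assms(2) by (simp add: D_pref_count)
qed

lemma
  assumes "is_profile n h p" "n \<ge> 1" "h \<ge> 1"
  shows mu_of_gt_half: "h < 2 * mu_of n h p"
    and mu_of_le: "mu_of n h p \<le> h"
    and D_mu_of_nonempty: "D n h (mu_of n h p) p \<noteq> {}"
proof -
  obtain t where "t \<in> {1..n}" "\<And>y. y \<in> {1..n} \<Longrightarrow> \<not> above (p 1) y t"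
    using profile_top_exists[OF assms(1) _ assms(2), of 1] assms(3) by auto
  then have "D n h h p \<noteq> {}"
    using top_in_D_h[of 1 h t n p] assms(3) by auto
  then have "h < 2 * mu_of n h p \<and> mu_of n h p \<le> h \<and> D n h (mu_of n h p) p \<noteq> {}"
    using LeastI[of "\<lambda>mu. h < 2 * mu \<and> mu \<le> h \<and> D n h mu p \<noteq> {}" h] assms(3)
    unfolding mu_of_def by simp
  then show "h < 2 * mu_of n h p" "mu_of n h p \<le> h" "D n h (mu_of n h p) p \<noteq> {}"
    by auto
qed

lemma D_below_mu_of_empty:
  assumes "is_profile n h p" "n \<ge> 1" "h \<ge> 1" "h < 2 * k" "k < mu_of n h p"
  shows "D n h k p = {}"
proof -
  have "k \<le> h"
    using mu_of_le[OF assms(1-3)] assms(5) by simp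
  moreover have "\<not> (h < 2 * k \<and> k \<le> h \<and> D n h k p \<noteq> {})"
    using assms(5) unfolding mu_of_def by (rule not_less_Least)
  ultimately show ?thesis
    using assms(4) by simp
qed

lemma mu_of_eq_majority:
  assumes "D n h (h div 2 + 1) p \<noteq> {}" "h \<ge> 1"
  shows "mu_of n h p = h div 2 + 1"
  unfolding mu_of_def
proof (rule Least_equality)
  show "h < 2 * (h div 2 + 1) \<and> h div 2 + 1 \<le> h \<and> D n h (h div 2 + 1) p \<noteq> {}"
    using assms by auto
next
  show "h div 2 + 1 \<le> k" if "h < 2 * k \<and> k \<le> h \<and> D n h k p \<noteq> {}" for k
    using that div_mult_mod_eq[of h 2] by linarith
qed

locale reversal_stable_winner =
  fixes n h :: nat and p :: "nat \<Rightarrow> nat rel" and x :: nat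
  assumes profile: "is_profile n h p"
    and n_ge_2: "n \<ge> 2" and h_ge_2: "h \<ge> 2"
    and unique_winner: "D n h (mu_of n h p) p = {x}"
    and rev_winner: "x \<in> D n h (mu_of n h (rev_profile p)) (rev_profile p)"
begin

abbreviation "N \<equiv> {1..n}"
abbreviation "c \<equiv> pref_count h p"
abbreviation "mu \<equiv> mu_of n h p"
abbreviation "mu' \<equiv> mu_of n h (rev_profile p)"

lemma winner_in_N: "x \<in> N"
  using unique_winner by (auto simp: D_def)

lemma mu_bounds: "h < 2 * mu" "mu \<le> h" "h < 2 * mu'" "mu' \<le> h"
  using n_ge_2 h_ge_2 mu_of_gt_half mu_of_le profile is_profile_rev_profile[OF profile] by auto

lemma beats_winner_lt: "v \<in> N \<Longrightarrow> c v x < mu"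
  using unique_winner[THEN equalityD2] by (auto simp: D_pref_count)

lemma loser_beaten:
  assumes "v \<in> N" "v \<noteq> x"
  shows "\<exists>w\<in>N. w \<noteq> v \<and> mu \<le> c w v"
proof -
  have "v \<notin> D n h mu p"
    using unique_winner assms(2) by simp
  then obtain w where "w \<in> N" "mu \<le> c w v"
    using assms(1) by (auto simp: D_pref_count not_less)
  moreover have "w \<noteq> v"
    using calculation(2) mu_bounds(1) by auto
  ultimately show ?thesis
    by blast
qed

lemma winner_beats_lt: "v \<in> N \<Longrightarrow> c x v < mu'"
  using rev_winner by (auto simp: D_rev_profile)

lemma rev_below_mu'_beaten:
  assumes "h < 2 * (mu' - 1)" "w \<in> N"
  shows "\<exists>v\<in>N. v \<noteq> w \<and> mu' - 1 \<le> c w v"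
proof -
  have "D n h (mu' - 1) (rev_profile p) = {}"
    using D_below_mu_of_empty[OF is_profile_rev_profile[OF profile]] n_ge_2 h_ge_2 assms(1) by simp
  then obtain v where "v \<in> N" "mu' - 1 \<le> c w v"
    using assms(2) by (auto simp: D_rev_profile not_less)
  moreover have "v \<noteq> w"
    using calculation(2) assms(1) by auto
  ultimately show ?thesis
    by blast
qed

lemma counts_complement: "a \<in> N \<Longrightarrow> b \<in> N \<Longrightarrow> a \<noteq> b \<Longrightarrow> c a b + c b a = h"
  using pref_count_complement[OF profile, of b a] by simp

lemma mu_less_h: "mu < h"
proof (rule ccontr)
  assume "\<not> mu < h"
  then have mu_h: "mu = h"
    using mu_bounds by simp
  obtain v where v: "v \<in> N" "v \<noteq> x"
    using n_ge_2 winner_in_N by (cases "x = 1") (auto intro: that[of 1] that[of 2])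
  have "above (p i) x v" if i: "i \<in> {1..h}" for i
  proof -
    obtain t where t: "t \<in> N" "\<And>y. y \<in> N \<Longrightarrow> \<not> above (p i) y t"
      using profile_top_exists[OF profile i] n_ge_2 by auto
    then have "t = x"
      using top_in_D_h[of i h t n p] i t unique_winner mu_h by auto
    then show ?thesis
      using t v winner_in_N profile_linear_order(3)[OF profile i, of x v] by auto
  qed
  then have "{i \<in> {1..h}. above (p i) x v} = {1..h}"
    by blast
  then have "c x v = h"
    by (simp add: pref_count_def)
  then show False
    using winner_beats_lt[OF v(1)] mu_bounds by simp
qed

lemma n_ne_2: "n \<noteq> 2"
proof
  assume "n = 2"
  then have "card (N - {x}) = 1"
    using winner_in_N by simp
  then obtain y where "N - {x} = {y}"
    by (rule card_1_singletonE)
  then have N: "N = {x, y}" and "y \<in> N" "y \<noteq> x"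
    using winner_in_N by blast+
  have "c y x < mu" "mu \<le> c x y" "c x y < mu'" "c x y + c y x = h"
    using beats_winner_lt[OF \<open>y \<in> N\<close>] loser_beaten[OF \<open>y \<in> N\<close> \<open>y \<noteq> x\<close>]
      winner_beats_lt[OF \<open>y \<in> N\<close>] counts_complement[OF winner_in_N \<open>y \<in> N\<close>] \<open>y \<noteq> x\<close>
    unfolding N by auto
  moreover have "mu' - 1 \<le> c y x" if "h < 2 * (mu' - 1)"
    using rev_below_mu'_beaten[OF that \<open>y \<in> N\<close>] unfolding N by auto
  ultimately show False
    using mu_bounds by linarith
qed

lemma n_ne_3: "n \<noteq> 3"
proof
  assume "n = 3"
  then have "card (N - {x}) = 2"
    using winner_in_N by simp
  then obtain y z where "N - {x} = {y, z}" "y \<noteq> z"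
    unfolding card_2_iff by blast
  then have N: "N = {x, y, z}" and "y \<in> N" "z \<in> N" "y \<noteq> x" "z \<noteq> x"
    using winner_in_N by blast+
  have "c y x < mu" "c z x < mu" "c x y < mu'" "c x z < mu'"
    using beats_winner_lt winner_beats_lt \<open>y \<in> N\<close> \<open>z \<in> N\<close> by auto
  moreover have "mu \<le> c x y \<or> mu \<le> c z y" "mu \<le> c x z \<or> mu \<le> c y z"
    using loser_beaten[OF \<open>y \<in> N\<close> \<open>y \<noteq> x\<close>] loser_beaten[OF \<open>z \<in> N\<close> \<open>z \<noteq> x\<close>]
    unfolding N by auto
  moreover have "c x y + c y x = h" "c x z + c z x = h" "c y z + c z y = h"
    using counts_complement winner_in_N \<open>y \<in> N\<close> \<open>z \<in> N\<close> \<open>y \<noteq> x\<close> \<open>z \<noteq> x\<close> \<open>y \<noteq> z\<close>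
    by auto
  moreover have "mu' - 1 \<le> c y x \<or> mu' - 1 \<le> c y z" "mu' - 1 \<le> c z x \<or> mu' - 1 \<le> c z y"
    if "h < 2 * (mu' - 1)"
    using rev_below_mu'_beaten[OF that \<open>y \<in> N\<close>] rev_below_mu'_beaten[OF that \<open>z \<in> N\<close>]
    unfolding N by auto
  ultimately show False
    using mu_bounds by linarith
qed

text \<open>For \<open>n = h = 4\<close> we have \<open>mu = 3\<close>, and either value of \<open>mu'\<close> forces the three losers
  to beat one another by margins \<open>\<ge> 3\<close> out of 4 along a cycle, which no profile allows.\<close>
lemma not_n_4_h_4: "\<not> (n = 4 \<and> h = 4)"
proof
  assume nh: "n = 4 \<and> h = 4"
  then have "card (N - {x}) = 3"
    using winner_in_N by simp
  then obtain y z w where "N - {x} = {y, z, w}" "y \<noteq> z" "z \<noteq> w" "y \<noteq> w"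
    unfolding card_3_iff by blast
  then have N: "N = {x, y, z, w}" and mem: "y \<in> N" "z \<in> N" "w \<in> N"
    and ne: "y \<noteq> x" "z \<noteq> x" "w \<noteq> x"
    using winner_in_N by blast+
  have mu: "mu = 3"
    using mu_less_h mu_bounds nh by linarith
  have compl: "c z y + c y z = 4" "c w z + c z w = 4" "c y w + c w y = 4"
    using counts_complement mem \<open>y \<noteq> z\<close> \<open>z \<noteq> w\<close> \<open>y \<noteq> w\<close> nh by auto
  have cyc: "c y z + c z w + c w y \<le> 8" "c y w + c w z + c z y \<le> 8"
    using pref_count_cycle_le[OF profile] nh by auto
  consider "mu' = 3" | "mu' = 4"
    using mu_bounds nh by linarith
  then show False
  proof cases
    case 1
    have "c x y < 3" "c x z < 3" "c x w < 3"
      using winner_beats_lt mem 1 by auto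
    moreover have "\<exists>u\<in>{x, y, z, w}. u \<noteq> v \<and> 3 \<le> c u v" if "v \<in> N" "v \<noteq> x" for v
      using loser_beaten[OF that] mu unfolding N by simp
    ultimately have "3 \<le> c z y \<or> 3 \<le> c w y" "3 \<le> c y z \<or> 3 \<le> c w z" "3 \<le> c z w \<or> 3 \<le> c y w"
      using mem ne by fastforce+
    then show False
      using compl cyc by linarith
  next
    case 2
    have "c y x < 3" "c z x < 3" "c w x < 3"
      using beats_winner_lt mem mu by auto
    moreover have "\<exists>v\<in>{x, y, z, w}. v \<noteq> u \<and> 3 \<le> c u v" if "u \<in> N" for u
      using rev_below_mu'_beaten[OF _ that] 2 nh unfolding N by simp
    ultimately have "3 \<le> c y z \<or> 3 \<le> c y w" "3 \<le> c z y \<or> 3 \<le> c z w" "3 \<le> c w y \<or> 3 \<le> c w z"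
      using mem by fastforce+
    then show False
      using compl cyc by linarith
  qed
qed

theorem outside_T2: "\<not> (h = 2 \<or> n \<le> 3 \<or> (h = 4 \<and> n = 4))"
  using mu_less_h mu_bounds n_ge_2 n_ne_2 n_ne_3 not_n_4_h_4 by linarith

end

lemma card_congruent_le:
  fixes m r h :: nat
  assumes "m > 0"
  shows "card {i \<in> {1..h}. i mod m = r} \<le> (h - 1) div m + 1"
proof (cases "{i \<in> {1..h}. i mod m = r} = {}")
  case True
  then show ?thesis
    unfolding True by simp
next
  case False
  let ?S = "{i \<in> {1..h}. i mod m = r}"
  define i0 where "i0 = Min ?S"
  have "finite ?S"
    by simp
  have i0: "i0 \<in> ?S" "\<And>i. i \<in> ?S \<Longrightarrow> i0 \<le> i"
    unfolding i0_def by (rule Min_in[OF \<open>finite ?S\<close> False], rule Min_le[OF \<open>finite ?S\<close>])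
  have "?S \<subseteq> (\<lambda>k. i0 + m * k) ` {..(h - 1) div m}"
  proof
    fix i assume i: "i \<in> ?S"
    then have "m dvd i - i0"
      using i0 mod_eq_dvd_iff_nat[of i0 i m] by auto
    then obtain k where k: "i - i0 = m * k" ..
    then have "m * k \<le> h - 1"
      using i i0(1) by auto
    then have "k \<le> (h - 1) div m"
      using assms by (simp add: less_eq_div_iff_mult_less_eq mult.commute)
    moreover have "i = i0 + m * k"
      using k i0(2)[OF i] by simp
    ultimately show "i \<in> (\<lambda>k. i0 + m * k) ` {..(h - 1) div m}"
      by blast
  qed
  then have "card ?S \<le> card ((\<lambda>k. i0 + m * k) ` {..(h - 1) div m})"
    by (rule card_mono[rotated]) simp
  also have "\<dots> \<le> (h - 1) div m + 1"
    using card_image_le[of "{..(h - 1) div m}" "\<lambda>k. i0 + m * k"] by simp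
  finally show ?thesis .
qed

definition cyclic_util :: "nat \<Rightarrow> nat \<Rightarrow> nat \<Rightarrow> nat \<Rightarrow> int" where
  "cyclic_util n h i v =
     (if v = n then if i \<le> h div 2 + 1 then int n else -1
      else (int i - int v) mod int (n - 1))"

definition cyclic_profile :: "nat \<Rightarrow> nat \<Rightarrow> nat \<Rightarrow> nat rel" where
  "cyclic_profile n h i =
     {(a, b). a \<in> {1..n} \<and> b \<in> {1..n} \<and> cyclic_util n h i a \<le> cyclic_util n h i b}"

lemma cyclic_util_bounds:
  assumes "n \<ge> 2" "v \<noteq> n"
  shows "0 \<le> cyclic_util n h i v" "cyclic_util n h i v < int (n - 1)"
  using assms pos_mod_sign[of "int (n - 1)"] pos_mod_bound[of "int (n - 1)"]
  by (simp_all add: cyclic_util_def)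

lemma cyclic_util_inj:
  assumes "n \<ge> 2" "a \<in> {1..n}" "b \<in> {1..n}" "cyclic_util n h i a = cyclic_util n h i b"
  shows "a = b"
proof (cases "a = n \<or> b = n")
  case True
  have "cyclic_util n h i n = int n \<or> cyclic_util n h i n = -1"
    by (simp add: cyclic_util_def)
  then have "cyclic_util n h i v \<noteq> cyclic_util n h i n" if "v \<noteq> n" for v
    using cyclic_util_bounds[OF assms(1) that, of h i] by auto
  then show ?thesis
    using True assms(4) by metis
next
  case False
  then have "(int i - int a) mod int (n - 1) = (int i - int b) mod int (n - 1)"
    using assms(4) by (simp add: cyclic_util_def)
  then have "int (n - 1) dvd int b - int a"
    by (simp add: mod_eq_dvd_iff)
  moreover have "\<bar>int b - int a\<bar> < int (n - 1)"
    using False assms(2,3) by auto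
  ultimately show "a = b"
    using dvd_imp_le_int[of "int b - int a" "int (n - 1)"] by fastforce
qed

lemma is_profile_cyclic_profile:
  assumes "n \<ge> 2"
  shows "is_profile n h (cyclic_profile n h)"
  unfolding is_profile_def
proof
  fix i
  have "antisym (cyclic_profile n h i)"
    using cyclic_util_inj[OF assms] by (auto simp: antisym_def cyclic_profile_def)
  moreover have "trans (cyclic_profile n h i)"
    by (auto simp: trans_def cyclic_profile_def)
  ultimately show "linear_order_on {1..n} (cyclic_profile n h i)"
    by (auto simp: order_on_defs refl_on_def total_on_def cyclic_profile_def)
qed

lemma pref_count_cyclic_profile:
  assumes "n \<ge> 2" "x \<in> {1..n}" "y \<in> {1..n}"
  shows "pref_count h (cyclic_profile n h) y x
    = card {i \<in> {1..h}. cyclic_util n h i x < cyclic_util n h i y}"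
proof -
  have "above (cyclic_profile n h i) y x \<longleftrightarrow> cyclic_util n h i x < cyclic_util n h i y" for i
    using assms cyclic_util_inj[OF assms(1,2,3), of h i]
    by (auto simp: above_def cyclic_profile_def order_less_le)
  then show ?thesis
    by (simp add: pref_count_def)
qed

lemma pref_count_cyclic_top:
  assumes "n \<ge> 2" "h \<ge> 2" "a \<in> {1..n - 1}"
  shows "pref_count h (cyclic_profile n h) n a = h div 2 + 1"
proof -
  have "a \<noteq> n" "a \<in> {1..n}"
    using assms(3) by auto
  have iff: "cyclic_util n h i a < cyclic_util n h i n \<longleftrightarrow> i \<le> h div 2 + 1" for i
  proof -
    have "int (n - 1) < int n"
      using assms(1) by simp
    then have "0 \<le> cyclic_util n h i a" "cyclic_util n h i a < int n"
      using cyclic_util_bounds[OF assms(1) \<open>a \<noteq> n\<close>, of h i] by linarith+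
    moreover have "cyclic_util n h i n = (if i \<le> h div 2 + 1 then int n else -1)"
      by (simp add: cyclic_util_def)
    ultimately show ?thesis
      by (simp split: if_split)
  qed
  have "h div 2 + 1 \<le> h"
    using assms(2) by linarith
  then have "{i \<in> {1..h}. i \<le> h div 2 + 1} = {1..h div 2 + 1}"
    by auto
  then have "{i \<in> {1..h}. cyclic_util n h i a < cyclic_util n h i n} = {1..h div 2 + 1}"
    by (simp only: iff)
  then show ?thesis
    using pref_count_cyclic_profile[OF assms(1) \<open>a \<in> {1..n}\<close>, of n h] assms(1) by simp
qed

lemma cyclic_util_succ_less:
  assumes "n \<ge> 2" "a \<in> {1..n - 1}" "\<not> i mod (n - 1) = a mod (n - 1)"
  shows "cyclic_util n h i (a mod (n - 1) + 1) < cyclic_util n h i a"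
proof -
  let ?m = "int (n - 1)" and ?r = "(int i - int a) mod int (n - 1)"
  have m: "?m > 0"
    using assms(1) by simp
  have "?r \<noteq> 0"
    using assms(3) by (simp add: mod_eq_0_iff_dvd flip: mod_eq_dvd_iff zmod_int of_nat_eq_iff)
  then have r: "0 < ?r" "?r < ?m"
    using m pos_mod_sign[OF m, of "int i - int a"] pos_mod_bound[OF m, of "int i - int a"] by linarith+
  have "(int i - int (a mod (n - 1) + 1)) mod ?m = (int i - 1 - int a mod ?m) mod ?m"
    by (simp add: zmod_int algebra_simps)
  also have "\<dots> = (int i - 1 - int a) mod ?m"
    by (rule mod_diff_right_eq)
  also have "\<dots> = (int i - int a - 1) mod ?m"
    by (simp add: algebra_simps)
  also have "\<dots> = (?r - 1) mod ?m"
    by (rule mod_diff_left_eq[symmetric])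
  also have "\<dots> = ?r - 1"
    by (rule mod_pos_pos_trivial) (use r in linarith)+
  finally have succ_mod: "(int i - int (a mod (n - 1) + 1)) mod ?m = ?r - 1" .
  have "a mod (n - 1) < n - 1"
    using assms(1) by simp
  then have "a mod (n - 1) + 1 \<noteq> n" "a \<noteq> n"
    using assms(2) by auto
  then show ?thesis
    using succ_mod by (simp add: cyclic_util_def)
qed

lemma wraparounds_le_minority:
  fixes h m :: nat
  assumes "h \<ge> 3" "m \<ge> 3" "h = 4 \<longrightarrow> m \<ge> 4"
  shows "(h - 1) div m + 1 \<le> h - (h div 2 + 1)"
proof -
  have quota: "h - (h div 2 + 1) = (h - 1) div 2"
    using assms(1) by presburger
  show ?thesis
  proof (cases "h = 4")
    case True
    then show ?thesis
      using assms(3) by simp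
  next
    case False
    have "(h - 1) div m \<le> (h - 1) div 3"
      by (rule div_le_mono2) (use assms(2) in auto)
    moreover have "k div 3 + 1 \<le> k div 2" if "k \<ge> 2" "k \<noteq> 3" for k :: nat
      using that by presburger
    then have "(h - 1) div 3 + 1 \<le> (h - 1) div 2"
      using False assms(1) by simp
    ultimately show ?thesis
      unfolding quota by linarith
  qed
qed

lemma pref_count_cyclic_succ:
  assumes "n \<ge> 4" "h \<ge> 3" "\<not> (h = 4 \<and> n = 4)" "a \<in> {1..n - 1}"
  shows "h div 2 + 1 \<le> pref_count h (cyclic_profile n h) a (a mod (n - 1) + 1)"
proof -
  let ?P = "cyclic_profile n h" and ?b = "a mod (n - 1) + 1"
  have n2: "n \<ge> 2"
    using assms(1) by simp
  have "a mod (n - 1) < n - 1"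
    using assms(1) by simp
  then have a: "a \<in> {1..n}" and b: "?b \<in> {1..n}" "?b \<noteq> a"
    using assms(1,4) by (auto simp: mod_if split: if_splits)
  have "{i \<in> {1..h}. cyclic_util n h i a < cyclic_util n h i ?b}
      \<subseteq> {i \<in> {1..h}. i mod (n - 1) = a mod (n - 1)}"
    using cyclic_util_succ_less[of n a _ h] assms(1,4) by fastforce
  then have "pref_count h ?P ?b a \<le> card {i \<in> {1..h}. i mod (n - 1) = a mod (n - 1)}"
    unfolding pref_count_cyclic_profile[OF n2 a b(1)] by (intro card_mono) auto
  also have "\<dots> \<le> (h - 1) div (n - 1) + 1"
    using assms(1) by (intro card_congruent_le) simp
  also have "\<dots> \<le> h - (h div 2 + 1)"
    using assms(1-3) by (intro wraparounds_le_minority) auto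
  finally have "pref_count h ?P ?b a \<le> h - (h div 2 + 1)" .
  moreover have "pref_count h ?P ?b a + pref_count h ?P a ?b = h"
    using pref_count_complement[OF is_profile_cyclic_profile[OF n2] a b(1) b(2)[symmetric]] by simp
  moreover have "h div 2 + 1 \<le> h"
    using assms(2) by linarith
  ultimately show ?thesis
    by linarith
qed

lemma D_majority_cyclic_profile:
  assumes "n \<ge> 2" "h \<ge> 2"
  shows "D n h (h div 2 + 1) (cyclic_profile n h) = {n}"
proof -
  let ?P = "cyclic_profile n h" and ?q = "h div 2 + 1"
  have n: "n \<in> {1..n}"
    using assms(1) by simp
  have top: "pref_count h ?P n a = ?q" and bottom: "pref_count h ?P a n < ?q"
    if "a \<in> {1..n}" "a \<noteq> n" for a
  proof -
    have "a \<in> {1..n - 1}"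
      using that by auto
    then show "pref_count h ?P n a = ?q"
      by (rule pref_count_cyclic_top[OF assms])
    moreover have "pref_count h ?P a n + pref_count h ?P n a = h"
      using pref_count_complement[OF is_profile_cyclic_profile[OF assms(1)] n that(1)] that(2)
      by simp
    ultimately show "pref_count h ?P a n < ?q"
      by linarith
  qed
  show ?thesis
  proof (intro set_eqI iffI)
    fix v assume "v \<in> D n h ?q ?P"
    then have "v \<in> {1..n}" "pref_count h ?P n v < ?q"
      using n by (auto simp: D_pref_count)
    then show "v \<in> {n}"
      using top by fastforce
  next
    fix v assume "v \<in> {n}"
    moreover have "pref_count h ?P y n < ?q" if "y \<in> {1..n}" for y
      using bottom[OF that] by (cases "y = n") simp_all
    ultimately show "v \<in> D n h ?q ?P"
      using n by (simp add: D_pref_count)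
  qed
qed

lemma D_majority_rev_cyclic_profile:
  assumes "n \<ge> 4" "h \<ge> 3" "\<not> (h = 4 \<and> n = 4)"
  shows "D n h (h div 2 + 1) (rev_profile (cyclic_profile n h)) = {}"
proof -
  have "\<exists>y\<in>{1..n}. h div 2 + 1 \<le> pref_count h (cyclic_profile n h) z y" if "z \<in> {1..n}" for z
  proof (cases "z = n")
    case True
    then show ?thesis
      using pref_count_cyclic_top[of n h 1] assms by (intro bexI[of _ 1]) auto
  next
    case False
    have "z mod (n - 1) < n - 1"
      using assms(1) by simp
    then have "z mod (n - 1) + 1 \<in> {1..n}"
      by simp
    moreover have "z \<in> {1..n - 1}"
      using that False by auto
    ultimately show ?thesis
      using pref_count_cyclic_succ[OF assms] by blast
  qed
  then show ?thesis
    by (fastforce simp: D_rev_profile not_less)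
qed

lemma cyclic_profile_winner:
  assumes "n \<ge> 4" "h \<ge> 3" "\<not> (h = 4 \<and> n = 4)"
  defines "P \<equiv> cyclic_profile n h"
  shows "D n h (mu_of n h P) P = {n}" "n \<in> D n h (mu_of n h (rev_profile P)) (rev_profile P)"
proof -
  have prof: "is_profile n h P"
    unfolding P_def using assms(1) by (intro is_profile_cyclic_profile) simp
  have D: "D n h (h div 2 + 1) P = {n}"
    unfolding P_def using assms(1,2) by (intro D_majority_cyclic_profile) auto
  then show "D n h (mu_of n h P) P = {n}"
    using assms(2) mu_of_eq_majority[of n h P] by simp
  let ?mu' = "mu_of n h (rev_profile P)"
  have "h < 2 * ?mu'" "D n h ?mu' (rev_profile P) \<noteq> {}"
    using mu_of_gt_half D_mu_of_nonempty is_profile_rev_profile[OF prof] assms(1,2) by auto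
  moreover have "D n h (h div 2 + 1) (rev_profile P) = {}"
    unfolding P_def using assms(1-3) by (rule D_majority_rev_cyclic_profile)
  ultimately have "?mu' \<noteq> h div 2 + 1" "h div 2 + 1 \<le> ?mu'"
    using div_mult_mod_eq[of h 2] by auto
  then have "h div 2 + 1 < ?mu'"
    by simp
  moreover have "pref_count h P n y \<le> h div 2 + 1" if "y \<in> {1..n}" for y
    using pref_count_cyclic_top[of n h y] that assms(1,2) unfolding P_def
    by (cases "y = n") auto
  ultimately show "n \<in> D n h ?mu' (rev_profile P)"
    using assms(1) by (fastforce simp: D_rev_profile)
qed

theorem proposition4:
  fixes n h :: nat
  assumes "n \<ge> 2" and "h \<ge> 2"
  shows "(\<exists>p x. is_profile n h p \<and> x \<in> {1..n} \<and>
            D n h (mu_of n h p) p = {x} \<and>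
            {x} \<subseteq> D n h (mu_of n h (rev_profile p)) (rev_profile p))
         \<longleftrightarrow> \<not> (h = 2 \<or> n \<le> 3 \<or> (h = 4 \<and> n = 4))"
proof
  assume "\<exists>p x. is_profile n h p \<and> x \<in> {1..n} \<and>
            D n h (mu_of n h p) p = {x} \<and>
            {x} \<subseteq> D n h (mu_of n h (rev_profile p)) (rev_profile p)"
  then obtain p x where "reversal_stable_winner n h p x"
    using assms by (auto simp: reversal_stable_winner_def)
  then show "\<not> (h = 2 \<or> n \<le> 3 \<or> (h = 4 \<and> n = 4))"
    by (rule reversal_stable_winner.outside_T2)
next
  assume "\<not> (h = 2 \<or> n \<le> 3 \<or> (h = 4 \<and> n = 4))"
  then have "n \<ge> 4" "h \<ge> 3" "\<not> (h = 4 \<and> n = 4)"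
    using assms by auto
  then show "\<exists>p x. is_profile n h p \<and> x \<in> {1..n} \<and>
            D n h (mu_of n h p) p = {x} \<and>
            {x} \<subseteq> D n h (mu_of n h (rev_profile p)) (rev_profile p)"
    using cyclic_profile_winner is_profile_cyclic_profile
    by (intro exI[of _ "cyclic_profile n h"] exI[of _ n]) auto
qed

end
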